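(* Consider the permanently Colored Magnetic Tower of Hanoi with $N\ge 1$ disks, posts $S$ (source), $I$ (intermediate), $D$ (destination), where $S$ is colored Red, $D$ is colored Blue, and $I$ is colored either Blue or Red (both versions). Then the minimum number of moves needed to transfer all $N$ disks from $S$ to $D$ is $$S_{100}(N)=\sum_{k=1}^N 3^{k-1}=\frac{3^N-1}{2},$$ and in such a minimal solution disk $k$ (disks numbered $1,\dots,N$ from largest to smallest) is moved exactly $P_{100}(k)=3^{k-1}$ times.
   Context: Magnetic Tower of Hanoi (MToH): there are three posts and $N$ disks of distinct diameters, numbered $1$ (largest) to $N$ (smallest). Each disk has two faces, one Red and one Blue. Initially all $N$ disks are stacked on the source post $S$ in decreasing size from bottom to top, each with its Red face up (Blue face down). A move consists of lifting the top disk of some post, turning it upside down, and placing it on top of another post. Rules: (Size rule) a disk may never be placed on a smaller disk; (Magnet rule) a disk may never be placed so that its downward-facing side has the same color as the upward-facing side of the disk it lands on. The puzzle is solved when all $N$ disks are on the destination post $D$ (one of the two initially empty posts) in decreasing size from bottom to top. In the permanently Colored MToH, each post additionally carries a fixed color, and any disk lying on a post (whether or not the post contains other disks) must have its upward-facing side of that post's color. *)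

theory Defs
  imports Main
begin

datatype post = S | I | D
datatype color = Red | Blue

fun flip :: "color \<Rightarrow> color" where
  "flip Red = Blue" | "flip Blue = Red"

fun post_color :: "color \<Rightarrow> post \<Rightarrow> color" where
  "post_color cI S = Red" | "post_color cI D = Blue" | "post_color cI I = cI"

text \<open>A configuration: for each disk its post and its upward-facing colour.
  Disks are 1..N, disk 1 largest, disk N smallest.\<close>
type_synonym config = "(nat \<Rightarrow> post) \<times> (nat \<Rightarrow> color)"

definition disks :: "nat \<Rightarrow> nat set" where
  "disks N = {1..N}"

text \<open>Legal move of disk k to post q in the permanently Colored MToH.
  The disk is turned upside down, so its new downward face is its old upward face.\<close>
definition legal_move :: "nat \<Rightarrow> color \<Rightarrow> config \<Rightarrow> nat \<Rightarrow> post \<Rightarrow> bool" where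
  "legal_move N cI c k q \<longleftrightarrow>
     (let pos = fst c; up = snd c in
       k \<in> disks N \<and> pos k \<noteq> q \<and>
       \<comment> \<open>k is the top disk of its post\<close>
       (\<forall>j\<in>disks N. pos j = pos k \<longrightarrow> j \<le> k) \<and>
       \<comment> \<open>size rule: all disks on q are larger\<close>
       (\<forall>j\<in>disks N. pos j = q \<longrightarrow> j < k) \<and>
       \<comment> \<open>magnet rule: new downward face differs from upward face of top disk of q\<close>
       (\<forall>j\<in>disks N. pos j = q \<and> (\<forall>i\<in>disks N. pos i = q \<longrightarrow> i \<le> j) \<longrightarrow> up j \<noteq> up k) \<and>
       \<comment> \<open>permanent colour rule: new upward face equals colour of q\<close>
       flip (up k) = post_color cI q)"

definition do_move :: "config \<Rightarrow> nat \<Rightarrow> post \<Rightarrow> config" where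
  "do_move c k q = ((fst c)(k := q), (snd c)(k := flip (snd c k)))"

fun run :: "nat \<Rightarrow> color \<Rightarrow> config \<Rightarrow> (nat \<times> post) list \<Rightarrow> config option" where
  "run N cI c [] = Some c"
| "run N cI c ((k, q) # ms) =
     (if legal_move N cI c k q then run N cI (do_move c k q) ms else None)"

definition init_config :: config where
  "init_config = (\<lambda>_. S, \<lambda>_. Red)"

definition solved :: "nat \<Rightarrow> config \<Rightarrow> bool" where
  "solved N c \<longleftrightarrow> (\<forall>k\<in>disks N. fst c k = D)"

definition is_solution :: "nat \<Rightarrow> color \<Rightarrow> (nat \<times> post) list \<Rightarrow> bool" where
  "is_solution N cI ms \<longleftrightarrow> (\<exists>c. run N cI init_config ms = Some c \<and> solved N c)"

definition min_moves :: "nat \<Rightarrow> color \<Rightarrow> nat" where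
  "min_moves N cI = (LEAST n. \<exists>ms. is_solution N cI ms \<and> length ms = n)"

definition moves_of_disk :: "(nat \<times> post) list \<Rightarrow> nat \<Rightarrow> nat" where
  "moves_of_disk ms k = length (filter (\<lambda>m. fst m = k) ms)"

end

theory Submission
  imports Defs
begin

(*
  Every disk shows the colour of its post and is turned over at each move, so a disk can only
  move between posts of different colours, and then the magnet rule holds automatically. Thus
  exactly two of the three pairs of posts are joined: the posts form a path with centre S (if I
  is Blue) or D (if I is Red), and in both versions S and D are neighbours. The puzzle is the
  Tower of Hanoi on this path.

  When a tower is moved between posts at distance \<delta>, the disk at depth d moves at least
  \<delta> * 3^d times: the largest disk moves at least \<delta> times, and before its first move, between
  its first and last moves, and after its last move the smaller disks perform three tower
  transfers whose distances add up to at least 3\<delta>. The recursive strategy attains all these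
  bounds at once; hence it is optimal, with (3^N - 1)/2 moves, and every optimal solution
  attains each per-disk bound.
*)

definition adjacent :: "post \<Rightarrow> post \<Rightarrow> post \<Rightarrow> bool" where
  "adjacent c p q \<longleftrightarrow> p \<noteq> q \<and> (p = c \<or> q = c)"

definition path_dist :: "post \<Rightarrow> post \<Rightarrow> post \<Rightarrow> nat" where
  "path_dist c p q = (if p = q then 0 else if adjacent c p q then 1 else 2)"

definition third :: "post \<Rightarrow> post \<Rightarrow> post" where
  "third a b = (if a \<noteq> S \<and> b \<noteq> S then S else if a \<noteq> I \<and> b \<noteq> I then I else D)"

lemma third_neq: "a \<noteq> b \<Longrightarrow> third a b \<noteq> a \<and> third a b \<noteq> b"
  by (cases a; cases b) (simp_all add: third_def)

lemma third_unique: "t \<noteq> a \<Longrightarrow> t \<noteq> b \<Longrightarrow> a \<noteq> b \<Longrightarrow> t = third a b"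
  by (cases a; cases b; cases t) (simp_all add: third_def)

lemma path_dist_third:
  "adjacent c a b \<Longrightarrow> path_dist c a (third a b) + path_dist c (third a b) b = 3"
  by (cases a; cases b; cases c) (simp_all add: path_dist_def adjacent_def third_def)

text \<open>The three terms are the distances travelled by the smaller disks before the first, between
  the first and last, and after the last move of the largest disk, which goes from a to x first
  and from y to b last.\<close>
lemma path_dist_detour:
  "adjacent c a x \<Longrightarrow> adjacent c y b \<Longrightarrow>
   3 * path_dist c a b \<le> path_dist c a (third a x) + path_dist c (third a x) (third y b) + path_dist c (third y b) b"
  by (cases a; cases b; cases c; cases x; cases y) (simp_all add: path_dist_def adjacent_def third_def)

section \<open>Tower of Hanoi on a path\<close>

text \<open>As in the puzzle, disks are numbered from the largest, so \<open>j < k\<close> means that disk j is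
  larger than disk k.\<close>
definition path_move :: "nat set \<Rightarrow> post \<Rightarrow> (nat \<Rightarrow> post) \<Rightarrow> nat \<Rightarrow> post \<Rightarrow> bool" where
  "path_move A c p k q \<longleftrightarrow> k \<in> A \<and> adjacent c (p k) q \<and>
     (\<forall>j\<in>A. p j = p k \<longrightarrow> j \<le> k) \<and> (\<forall>j\<in>A. p j = q \<longrightarrow> j < k)"

fun path_run :: "nat set \<Rightarrow> post \<Rightarrow> (nat \<Rightarrow> post) \<Rightarrow> (nat \<times> post) list \<Rightarrow> (nat \<Rightarrow> post) option" where
  "path_run A c p [] = Some p"
| "path_run A c p ((k, q) # ms) = (if path_move A c p k q then path_run A c (p(k := q)) ms else None)"

definition leads :: "nat set \<Rightarrow> post \<Rightarrow> (nat \<Rightarrow> post) \<Rightarrow> (nat \<times> post) list \<Rightarrow> (nat \<Rightarrow> post) \<Rightarrow> bool" where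
  "leads A c p ms q \<longleftrightarrow> (\<exists>p'. path_run A c p ms = Some p' \<and> (\<forall>k\<in>A. p' k = q k))"

lemma leads_Nil [simp]: "leads A c p [] q \<longleftrightarrow> (\<forall>k\<in>A. p k = q k)"
  by (simp add: leads_def)

lemma leads_Cons [simp]:
  "leads A c p ((k, x) # ms) q \<longleftrightarrow> path_move A c p k x \<and> leads A c (p(k := x)) ms q"
  by (simp add: leads_def)

lemma leads_moves_in: "leads A c p ms q \<Longrightarrow> mv \<in> set ms \<Longrightarrow> fst mv \<in> A"
  by (induction ms arbitrary: p) (auto simp: path_move_def)

lemma leads_unmoved: "leads A c p ms q \<Longrightarrow> k \<in> A \<Longrightarrow> \<forall>mv\<in>set ms. fst mv \<noteq> k \<Longrightarrow> q k = p k"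
  by (induction ms arbitrary: p) auto

lemma leads_restrict:
  assumes "leads A c p ms q" "B \<subseteq> A" "\<forall>k\<in>B. p' k = p k" "\<forall>k\<in>B. q' k = q k"
  shows "leads B c p' (filter (\<lambda>mv. fst mv \<in> B) ms) q'"
  using assms
proof (induction ms arbitrary: p p')
  case (Cons mv ms)
  obtain k x where mv: "mv = (k, x)" by fastforce
  with Cons.prems have move: "path_move A c p k x" and rest: "leads A c (p(k := x)) ms q"
    by simp_all
  show ?case
  proof (cases "k \<in> B")
    case True
    with move Cons.prems(2,3) have "path_move B c p' k x"
      by (auto simp: path_move_def)
    moreover have "\<forall>j\<in>B. (p'(k := x)) j = (p(k := x)) j"
      using Cons.prems(3) by simp
    ultimately show ?thesis
      using True mv Cons.IH[OF rest Cons.prems(2) _ Cons.prems(4)] by simp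
  next
    case False
    with Cons.prems(3) have "\<forall>j\<in>B. p' j = (p(k := x)) j"
      by simp
    with False mv Cons.IH[OF rest Cons.prems(2) _ Cons.prems(4)] show ?thesis
      by simp
  qed
qed auto

lemma leads_cong:
  "leads A c p ms q \<Longrightarrow> \<forall>k\<in>A. p' k = p k \<Longrightarrow> \<forall>k\<in>A. q' k = q k \<Longrightarrow> leads A c p' ms q'"
  using leads_restrict[of A c p ms q A p' q'] leads_moves_in[of A c p ms q]
  by (simp add: filter_id_conv)

lemma leads_restrict_const:
  "leads A c p ms q \<Longrightarrow> B \<subseteq> A \<Longrightarrow> \<forall>k\<in>B. p k = s \<Longrightarrow> \<forall>k\<in>B. q k = t \<Longrightarrow>
   leads B c (\<lambda>_. s) (filter (\<lambda>mv. fst mv \<in> B) ms) (\<lambda>_. t)"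
  using leads_restrict[of A c p ms q B "\<lambda>_. s" "\<lambda>_. t"] by simp

lemma leads_extend:
  assumes "leads B c p ms q" "B \<subseteq> A" "\<forall>j\<in>A - B. \<forall>k\<in>B. j < k" "\<forall>j\<in>A - B. q j = p j"
  shows "leads A c p ms q"
  using assms
proof (induction ms arbitrary: p)
  case (Cons mv ms)
  obtain k x where mv: "mv = (k, x)" by fastforce
  with Cons.prems(1) have move: "path_move B c p k x" and rest: "leads B c (p(k := x)) ms q"
    by simp_all
  from move Cons.prems(2,3) have "path_move A c p k x"
    unfolding path_move_def by (metis DiffI le_less subsetD)
  moreover from move Cons.prems(2,4) have "\<forall>j\<in>A - B. q j = (p(k := x)) j"
    by (auto simp: path_move_def)
  ultimately show ?case
    using mv Cons.IH[OF rest Cons.prems(2,3)] by (simp del: fun_upd_apply)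
qed auto

lemma leads_append: "leads A c p xs q \<Longrightarrow> leads A c q ys r \<Longrightarrow> leads A c p (xs @ ys) r"
proof (induction xs arbitrary: p)
  case Nil
  then show ?case by (simp add: leads_cong)
qed auto

lemma leads_appendE:
  assumes "leads A c p (xs @ ys) r"
  obtains q where "leads A c p xs q" "leads A c q ys r"
proof -
  from assms have "\<exists>q. leads A c p xs q \<and> leads A c q ys r"
  proof (induction xs arbitrary: p)
    case Nil
    then show ?case by auto
  next
    case (Cons mv xs)
    then show ?case by (cases mv) auto
  qed
  with that show thesis by blast
qed

lemma path_move_largest_iff:
  assumes "\<forall>k\<in>B. m < k"
  shows "path_move (insert m B) c p m x \<longleftrightarrow> adjacent c (p m) x \<and> (\<forall>k\<in>B. p k = third (p m) x)"
proof
  assume move: "path_move (insert m B) c p m x"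
  then have "p m \<noteq> x" by (simp add: path_move_def adjacent_def)
  moreover have "p k \<noteq> p m \<and> p k \<noteq> x" if "k \<in> B" for k
    using move assms that unfolding path_move_def by force
  ultimately show "adjacent c (p m) x \<and> (\<forall>k\<in>B. p k = third (p m) x)"
    using move third_unique by (simp add: path_move_def)
next
  assume "adjacent c (p m) x \<and> (\<forall>k\<in>B. p k = third (p m) x)"
  moreover have "third (p m) x \<noteq> p m \<and> third (p m) x \<noteq> x" if "p m \<noteq> x"
    using third_neq that by blast
  ultimately show "path_move (insert m B) c p m x"
    by (auto simp: path_move_def adjacent_def)
qed

lemma leads_largest_move:
  assumes "leads (insert m B) c p (pre @ (m, x) # post) q" "\<forall>k\<in>B. m < k"
  obtains p1 where "leads (insert m B) c p pre p1" "adjacent c (p1 m) x"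
    "\<forall>k\<in>B. p1 k = third (p1 m) x" "leads (insert m B) c (p1(m := x)) post q"
proof -
  from assms(1) obtain p1 where pre: "leads (insert m B) c p pre p1"
    and "leads (insert m B) c p1 ((m, x) # post) q"
    by (rule leads_appendE)
  then have "path_move (insert m B) c p1 m x" "leads (insert m B) c (p1(m := x)) post q"
    by simp_all
  with pre show thesis
    using that path_move_largest_iff[OF assms(2)] by simp
qed

lemma moves_of_disk_Nil [simp]: "moves_of_disk [] k = 0"
  by (simp add: moves_of_disk_def)

lemma moves_of_disk_Cons [simp]:
  "moves_of_disk (mv # ms) k = (if fst mv = k then 1 else 0) + moves_of_disk ms k"
  by (simp add: moves_of_disk_def)

lemma moves_of_disk_append [simp]:
  "moves_of_disk (xs @ ys) k = moves_of_disk xs k + moves_of_disk ys k"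
  by (simp add: moves_of_disk_def)

lemma moves_of_disk_eq_0_iff: "moves_of_disk ms k = 0 \<longleftrightarrow> (\<forall>mv\<in>set ms. fst mv \<noteq> k)"
  by (induction ms) auto

lemma moves_of_disk_filter:
  "k \<in> B \<Longrightarrow> moves_of_disk (filter (\<lambda>mv. fst mv \<in> B) ms) k = moves_of_disk ms k"
  by (induction ms) auto

lemma length_eq_sum_moves_of_disk:
  "finite A \<Longrightarrow> \<forall>mv\<in>set ms. fst mv \<in> A \<Longrightarrow> length ms = (\<Sum>k\<in>A. moves_of_disk ms k)"
  by (induction ms) (auto simp: sum.distrib)

lemma moves_of_disk_first_move:
  assumes "moves_of_disk ms k \<noteq> 0"
  obtains pre x post where "ms = pre @ (k, x) # post" "moves_of_disk pre k = 0"
proof -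
  from assms have "\<exists>mv\<in>set ms. fst mv = k"
    by (simp add: moves_of_disk_eq_0_iff)
  then obtain pre mv post where "ms = pre @ mv # post" "fst mv = k" "\<forall>y\<in>set pre. fst y \<noteq> k"
    by (rule split_list_first_propE)
  with that show thesis
    by (cases mv) (simp add: moves_of_disk_eq_0_iff)
qed

lemma moves_of_disk_last_move:
  assumes "moves_of_disk ms k \<noteq> 0"
  obtains pre x post where "ms = pre @ (k, x) # post" "moves_of_disk post k = 0"
proof -
  from assms have "\<exists>mv\<in>set ms. fst mv = k"
    by (simp add: moves_of_disk_eq_0_iff)
  then obtain pre mv post where "ms = pre @ mv # post" "fst mv = k" "\<forall>y\<in>set post. fst y \<noteq> k"
    by (rule split_list_last_propE)
  with that show thesis
    by (cases mv) (simp add: moves_of_disk_eq_0_iff)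
qed

section \<open>The lower bound\<close>

lemma leads_first_move_largest:
  assumes run: "leads (insert m B) c (\<lambda>_. a) ms q" and largest: "\<forall>k\<in>B. m < k"
    and moved: "moves_of_disk ms m \<noteq> 0"
  obtains pre x rest p where "ms = pre @ (m, x) # rest" "adjacent c a x"
    "leads B c (\<lambda>_. a) (filter (\<lambda>mv. fst mv \<in> B) pre) (\<lambda>_. third a x)"
    "p m = x" "\<forall>k\<in>B. p k = third a x" "leads (insert m B) c p rest q"
proof -
  obtain pre x rest where ms: "ms = pre @ (m, x) # rest" and pre_m: "moves_of_disk pre m = 0"
    using moved by (rule moves_of_disk_first_move)
  obtain p1 where pre: "leads (insert m B) c (\<lambda>_. a) pre p1" and adj: "adjacent c (p1 m) x"
    and p1: "\<forall>k\<in>B. p1 k = third (p1 m) x" and rest: "leads (insert m B) c (p1(m := x)) rest q"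
    using leads_largest_move[OF run[unfolded ms] largest] .
  have "p1 m = a"
    using leads_unmoved[OF pre insertI1] pre_m by (simp add: moves_of_disk_eq_0_iff)
  with adj p1 have adj_x: "adjacent c a x" and p1_B: "\<forall>k\<in>B. p1 k = third a x"
    by simp_all
  have "m \<notin> B" using largest by blast
  have "leads B c (\<lambda>_. a) (filter (\<lambda>mv. fst mv \<in> B) pre) (\<lambda>_. third a x)"
    using leads_restrict_const[OF pre subset_insertI] p1_B by simp
  with that[of pre x rest "p1(m := x)", OF ms adj_x] p1_B rest \<open>m \<notin> B\<close> show thesis
    by simp
qed

lemma leads_last_move_largest:
  assumes run: "leads (insert m B) c p ms (\<lambda>_. b)" and largest: "\<forall>k\<in>B. m < k"
    and moved: "moves_of_disk ms m \<noteq> 0"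
  obtains pre u suf q where "ms = pre @ (m, b) # suf" "adjacent c u b"
    "leads (insert m B) c p pre q" "\<forall>k\<in>B. q k = third u b"
    "leads B c (\<lambda>_. third u b) (filter (\<lambda>mv. fst mv \<in> B) suf) (\<lambda>_. b)"
proof -
  obtain pre y suf where ms: "ms = pre @ (m, y) # suf" and suf_m: "moves_of_disk suf m = 0"
    using moved by (rule moves_of_disk_last_move)
  obtain q where pre: "leads (insert m B) c p pre q" and adj: "adjacent c (q m) y"
    and q: "\<forall>k\<in>B. q k = third (q m) y" and suf: "leads (insert m B) c (q(m := y)) suf (\<lambda>_. b)"
    using leads_largest_move[OF run[unfolded ms] largest] .
  define u where "u = q m"
  have "y = b"
    using leads_unmoved[OF suf insertI1] suf_m by (simp add: moves_of_disk_eq_0_iff)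
  with adj q have adj_b: "adjacent c u b" and q_B: "\<forall>k\<in>B. q k = third u b"
    unfolding u_def[symmetric] by simp_all
  have "m \<notin> B" using largest by blast
  with q_B \<open>y = b\<close> have "leads B c (\<lambda>_. third u b) (filter (\<lambda>mv. fst mv \<in> B) suf) (\<lambda>_. b)"
    using leads_restrict_const[OF suf subset_insertI] by simp
  with that[OF ms[unfolded \<open>y = b\<close>] adj_b pre q_B] show thesis .
qed

lemma leads_split_largest:
  assumes run: "leads (insert m B) c (\<lambda>_. a) ms (\<lambda>_. b)" and largest: "\<forall>k\<in>B. m < k"
    and "a \<noteq> b"
  obtains xs t1 ys t2 zs where
    "leads B c (\<lambda>_. a) xs (\<lambda>_. t1)" "leads B c (\<lambda>_. t1) ys (\<lambda>_. t2)" "leads B c (\<lambda>_. t2) zs (\<lambda>_. b)"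
    "3 * path_dist c a b \<le> path_dist c a t1 + path_dist c t1 t2 + path_dist c t2 b"
    "\<And>k. k \<in> B \<Longrightarrow> moves_of_disk ms k = moves_of_disk xs k + moves_of_disk ys k + moves_of_disk zs k"
    "path_dist c a b \<le> moves_of_disk ms m"
proof -
  let ?F = "filter (\<lambda>mv. fst mv \<in> B)"
  have "m \<notin> B" using largest by blast
  have "moves_of_disk ms m \<noteq> 0"
    using leads_unmoved[OF run] \<open>a \<noteq> b\<close> by (auto simp: moves_of_disk_eq_0_iff)
  then obtain pre x rest p where ms: "ms = pre @ (m, x) # rest" and adj_x: "adjacent c a x"
    and xs: "leads B c (\<lambda>_. a) (?F pre) (\<lambda>_. third a x)"
    and "p m = x" and p: "\<forall>k\<in>B. p k = third a x" and rest: "leads (insert m B) c p rest (\<lambda>_. b)"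
    by (rule leads_first_move_largest[OF run largest])
  show thesis
  proof (cases "moves_of_disk rest m = 0")
    case True
    then have "x = b"
      using leads_unmoved[OF rest insertI1] \<open>p m = x\<close> by (simp add: moves_of_disk_eq_0_iff)
    have zs: "leads B c (\<lambda>_. third a b) (?F rest) (\<lambda>_. b)"
      using leads_restrict_const[OF rest subset_insertI] p \<open>x = b\<close> by simp
    show thesis
    proof (rule that[OF xs[unfolded \<open>x = b\<close>] _ zs])
      show "leads B c (\<lambda>_. third a b) [] (\<lambda>_. third a b)" by simp
      show "3 * path_dist c a b \<le> path_dist c a (third a b) + path_dist c (third a b) (third a b)
          + path_dist c (third a b) b"
        using path_dist_detour[of c a b a b] adj_x \<open>x = b\<close> by simp
      show "path_dist c a b \<le> moves_of_disk ms m"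
        using adj_x \<open>x = b\<close> by (simp add: ms path_dist_def)
    qed (use ms \<open>m \<notin> B\<close> moves_of_disk_filter in auto)
  next
    case False
    then obtain mid u suf q where rest_eq: "rest = mid @ (m, b) # suf" and adj_b: "adjacent c u b"
      and mid: "leads (insert m B) c p mid q" and q: "\<forall>k\<in>B. q k = third u b"
      and zs: "leads B c (\<lambda>_. third u b) (?F suf) (\<lambda>_. b)"
      by (rule leads_last_move_largest[OF rest largest])
    have ys: "leads B c (\<lambda>_. third a x) (?F mid) (\<lambda>_. third u b)"
      using leads_restrict_const[OF mid subset_insertI p q] .
    show thesis
    proof (rule that[OF xs ys zs path_dist_detour[OF adj_x adj_b]])
      show "path_dist c a b \<le> moves_of_disk ms m"
        by (simp add: ms rest_eq path_dist_def)
    qed (use ms rest_eq \<open>m \<notin> B\<close> moves_of_disk_filter in auto)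
  qed
qed

lemma moves_of_disk_lower_bound:
  assumes "leads {m..<m+n} c (\<lambda>_. a) ms (\<lambda>_. b)" "k \<in> {m..<m+n}"
  shows "path_dist c a b * 3 ^ (k - m) \<le> moves_of_disk ms k"
  using assms
proof (induction n arbitrary: m a b ms k)
  case (Suc n)
  let ?B = "{Suc m..<Suc m + n}"
  have A: "{m..<m + Suc n} = insert m ?B" and below: "\<forall>k\<in>?B. m < k" by auto
  show ?case
  proof (cases "a = b")
    case True
    then show ?thesis by (simp add: path_dist_def)
  next
    case False
    obtain xs t1 ys t2 zs where xs: "leads ?B c (\<lambda>_. a) xs (\<lambda>_. t1)"
      and ys: "leads ?B c (\<lambda>_. t1) ys (\<lambda>_. t2)" and zs: "leads ?B c (\<lambda>_. t2) zs (\<lambda>_. b)"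
      and detour: "3 * path_dist c a b \<le> path_dist c a t1 + path_dist c t1 t2 + path_dist c t2 b"
      and moves_split: "\<And>j. j \<in> ?B \<Longrightarrow> moves_of_disk ms j = moves_of_disk xs j + moves_of_disk ys j + moves_of_disk zs j"
      and moves_m: "path_dist c a b \<le> moves_of_disk ms m"
      using leads_split_largest[OF Suc.prems(1)[unfolded A] below False] by blast
    show ?thesis
    proof (cases "k = m")
      case True
      with moves_m show ?thesis by simp
    next
      case False
      with Suc.prems(2) have k: "k \<in> ?B" by auto
      then have "k - m = Suc (k - Suc m)" by auto
      then have "path_dist c a b * 3 ^ (k - m) = 3 * path_dist c a b * 3 ^ (k - Suc m)"
        by simp
      also have "\<dots> \<le> (path_dist c a t1 + path_dist c t1 t2 + path_dist c t2 b) * 3 ^ (k - Suc m)"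
        using detour by simp
      also have "\<dots> \<le> moves_of_disk xs k + moves_of_disk ys k + moves_of_disk zs k"
        using Suc.IH[OF xs k] Suc.IH[OF ys k] Suc.IH[OF zs k] by (simp add: distrib_right)
      also have "\<dots> = moves_of_disk ms k"
        using moves_split[OF k] by simp
      finally show ?thesis .
    qed
  qed
qed simp

section \<open>The recursive solution\<close>

lemma sum_pow3: "2 * (\<Sum>i<n. (3::nat) ^ i) + 1 = 3 ^ n"
  by (induction n) auto

lemma sum_pow3_shift: "(\<Sum>k=1..n. (3::nat) ^ (k - 1)) = (\<Sum>i<n. 3 ^ i)"
  by (induction n) auto

lemma sum_pow3_closed_form: "(\<Sum>i<n. (3::nat) ^ i) = (3 ^ n - 1) div 2"
  using sum_pow3[of n] by (metis add_diff_cancel_right' nonzero_mult_div_cancel_left zero_neq_numeral)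

fun tower_moves :: "post \<Rightarrow> post \<Rightarrow> post \<Rightarrow> nat \<Rightarrow> nat \<Rightarrow> (nat \<times> post) list" where
  "tower_moves c a b m 0 = []"
| "tower_moves c a b m (Suc n) =
    (if a = b then []
     else if adjacent c a b then
       tower_moves c a (third a b) (Suc m) n @ (m, b) # tower_moves c (third a b) b (Suc m) n
     else
       tower_moves c a b (Suc m) n @ (m, c) # tower_moves c b a (Suc m) n @ (m, b) #
       tower_moves c a b (Suc m) n)"

lemma length_tower_moves: "length (tower_moves c a b m n) = path_dist c a b * (\<Sum>i<n. 3 ^ i)"
proof (induction n arbitrary: a b m)
  case (Suc n)
  let ?R = "\<Sum>i<n. (3::nat) ^ i"
  have R: "(\<Sum>i<Suc n. (3::nat) ^ i) = 3 * ?R + 1"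
    using sum_pow3[of n] by simp
  consider "a = b" | "adjacent c a b" | "a \<noteq> b" "\<not> adjacent c a b"
    by blast
  then show ?case
  proof cases
    case 2
    then have "a \<noteq> b" "path_dist c a b = 1" by (simp_all add: adjacent_def path_dist_def)
    with 2 have "length (tower_moves c a b m (Suc n))
        = (path_dist c a (third a b) + path_dist c (third a b) b) * ?R + 1"
      by (simp add: Suc.IH algebra_simps)
    with path_dist_third[OF 2] \<open>path_dist c a b = 1\<close> show ?thesis
      unfolding R by simp
  next
    case 3
    then have "path_dist c a b = 2" "path_dist c b a = 2"
      by (auto simp: path_dist_def adjacent_def)
    with 3 show ?thesis
      unfolding R by (simp add: Suc.IH)
  qed (simp add: path_dist_def)
qed simp

lemma leads_below_largest:
  assumes "leads B c (\<lambda>_. v) xs (\<lambda>_. w)" "\<forall>k\<in>B. m < k"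
  shows "leads (insert m B) c (\<lambda>k. if k = m then u else v) xs (\<lambda>k. if k = m then u else w)"
proof (rule leads_extend)
  have "m \<notin> B" using assms(2) by blast
  then show "leads B c (\<lambda>k. if k = m then u else v) xs (\<lambda>k. if k = m then u else w)"
    using leads_cong[OF assms(1)] by simp
qed (use assms(2) in auto)

lemma leads_largest_step:
  assumes "adjacent c u x" "\<forall>k\<in>B. m < k"
  shows "leads (insert m B) c (\<lambda>k. if k = m then u else third u x) [(m, x)]
    (\<lambda>k. if k = m then x else third u x)"
  using assms path_move_largest_iff[OF assms(2)] by auto

lemma leads_tower_moves: "leads {m..<m+n} c (\<lambda>_. a) (tower_moves c a b m n) (\<lambda>_. b)"
proof (induction n arbitrary: a b m)
  case (Suc n)
  let ?B = "{Suc m..<Suc m + n}" and ?st = "\<lambda>u v k. if k = m then u else v"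
  have A: "{m..<m + Suc n} = insert m ?B" and below: "\<forall>k\<in>?B. m < k" by auto
  have tower: "leads (insert m ?B) c (?st u v) (tower_moves c v w (Suc m) n) (?st u w)" for u v w
    using leads_below_largest[OF Suc.IH[where a = v and b = w and m = "Suc m"] below] by simp
  have step: "leads (insert m ?B) c (?st u (third u x)) [(m, x)] (?st x (third u x))"
    if "adjacent c u x" for u x
    using leads_largest_step[OF that below] .
  consider "a = b" | "adjacent c a b" | "a \<noteq> b" "\<not> adjacent c a b"
    by blast
  then have "leads (insert m ?B) c (?st a a) (tower_moves c a b m (Suc n)) (?st b b)"
  proof cases
    case 2
    then show ?thesis
      using leads_append[OF tower[of a a "third a b"] leads_append[OF step[OF 2] tower[of b "third a b" b]]]
      by (simp del: leads_Cons)
  next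
    case 3
    then have ac: "adjacent c a c" "third a c = b" and cb: "adjacent c c b" "third c b = a"
      by (cases a; cases b; cases c; simp add: adjacent_def third_def)+
    note to_c = step[OF ac(1), unfolded ac(2)] and to_b = step[OF cb(1), unfolded cb(2)]
    from 3 show ?thesis
      using leads_append[OF tower[of a a b] leads_append[OF to_c leads_append[OF tower[of c b a]
            leads_append[OF to_b tower[of b a b]]]]]
      by (simp del: leads_Cons)
  qed simp
  then show ?case
    unfolding A by simp
qed simp

section \<open>The coloured puzzle as Hanoi on a path\<close>

text \<open>The post whose colour differs from that of the other two.\<close>
definition centre :: "color \<Rightarrow> post" where
  "centre cI = (if cI = Blue then S else D)"

lemma adjacent_centre_iff: "adjacent (centre cI) p q \<longleftrightarrow> post_color cI p \<noteq> post_color cI q"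
  by (cases cI; cases p; cases q) (simp_all add: centre_def adjacent_def)

definition colours_shown :: "nat \<Rightarrow> color \<Rightarrow> config \<Rightarrow> bool" where
  "colours_shown N cI c \<longleftrightarrow> (\<forall>k\<in>disks N. snd c k = post_color cI (fst c k))"

lemma flip_eq_iff: "flip u = v \<longleftrightarrow> u \<noteq> v"
  by (cases u; cases v) simp_all

lemma legal_move_iff_path_move:
  assumes "colours_shown N cI c"
  shows "legal_move N cI c k q \<longleftrightarrow> path_move (disks N) (centre cI) (fst c) k q"
proof -
  obtain pos up where c: "c = (pos, up)" by fastforce
  with assms have up: "\<And>j. j \<in> disks N \<Longrightarrow> up j = post_color cI (pos j)"
    by (simp add: colours_shown_def)
  have "flip (up k) = post_color cI q \<longleftrightarrow> adjacent (centre cI) (pos k) q" if "k \<in> disks N"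
    using up[OF that] by (simp add: adjacent_centre_iff flip_eq_iff)
  moreover have "up j \<noteq> up k" if "j \<in> disks N" "k \<in> disks N" "pos j = q" "adjacent (centre cI) (pos k) q" for j
    using that up by (simp add: adjacent_centre_iff)
  ultimately show ?thesis
    unfolding legal_move_def path_move_def c by auto
qed

lemma run_eq_path_run:
  "colours_shown N cI c \<Longrightarrow> map_option fst (run N cI c ms) = path_run (disks N) (centre cI) (fst c) ms"
proof (induction N cI c ms rule: run.induct)
  case (2 N cI c k q ms)
  show ?case
  proof (cases "legal_move N cI c k q")
    case True
    then have "colours_shown N cI (do_move c k q)"
      using 2(2) by (auto simp: colours_shown_def do_move_def legal_move_def Let_def)
    with True 2 show ?thesis
      using legal_move_iff_path_move[OF 2(2)] by (simp add: do_move_def del: fun_upd_apply)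
  next
    case False
    then show ?thesis
      using legal_move_iff_path_move[OF 2(2)] by simp
  qed
qed simp

lemma is_solution_iff_leads:
  "is_solution N cI ms \<longleftrightarrow> leads {1..<1+N} (centre cI) (\<lambda>_. S) ms (\<lambda>_. D)"
proof -
  have "disks N = {1..<1+N}" by (auto simp: disks_def)
  moreover have "colours_shown N cI init_config"
    by (simp add: colours_shown_def init_config_def)
  ultimately have "path_run {1..<1+N} (centre cI) (\<lambda>_. S) ms = map_option fst (run N cI init_config ms)"
    using run_eq_path_run by (simp add: init_config_def)
  then show ?thesis
    unfolding is_solution_def leads_def solved_def \<open>disks N = {1..<1+N}\<close>
    by (cases "run N cI init_config ms") auto
qed

lemma path_dist_source_destination: "path_dist (centre cI) S D = 1"
  by (simp add: path_dist_def adjacent_def centre_def)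

lemma solution_moves_of_disk_ge:
  "is_solution N cI ms \<Longrightarrow> k \<in> {1..N} \<Longrightarrow> 3 ^ (k - 1) \<le> moves_of_disk ms k"
  using moves_of_disk_lower_bound[of 1 N "centre cI" S ms D k] path_dist_source_destination[of cI]
  by (simp add: is_solution_iff_leads)

lemma solution_length_eq_sum:
  assumes "is_solution N cI ms"
  shows "length ms = (\<Sum>k=1..N. moves_of_disk ms k)"
proof -
  from assms have "leads {1..<1+N} (centre cI) (\<lambda>_. S) ms (\<lambda>_. D)"
    by (simp add: is_solution_iff_leads)
  then have "\<forall>mv\<in>set ms. fst mv \<in> {1..N}"
    using leads_moves_in by fastforce
  then show ?thesis
    using length_eq_sum_moves_of_disk by blast
qed

lemma tower_moves_solution:
  "is_solution N cI (tower_moves (centre cI) S D 1 N)"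
  "length (tower_moves (centre cI) S D 1 N) = (\<Sum>k=1..N. 3 ^ (k - 1))"
  using leads_tower_moves[of 1 N "centre cI" S D] length_tower_moves[of "centre cI" S D 1 N]
    path_dist_source_destination[of cI] sum_pow3_shift[of N]
  by (simp_all add: is_solution_iff_leads)

theorem mainTheorem1:
  fixes N :: nat and cI :: color
  assumes "N \<ge> 1"
  shows "min_moves N cI = (\<Sum>k=1..N. 3^(k-1))
    \<and> (\<Sum>k=1..N. (3::nat)^(k-1)) = (3^N - 1) div 2
    \<and> (\<exists>ms. is_solution N cI ms \<and> length ms = min_moves N cI)
    \<and> (\<forall>ms. is_solution N cI ms \<and> length ms = min_moves N cI \<longrightarrow>
          (\<forall>k\<in>{1..N}. moves_of_disk ms k = 3^(k-1)))"
proof -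
  let ?opt = "\<Sum>k=1..N. (3::nat) ^ (k - 1)"
  have lower: "?opt \<le> length ms" if "is_solution N cI ms" for ms
    unfolding solution_length_eq_sum[OF that] by (rule sum_mono) (rule solution_moves_of_disk_ge[OF that])
  have min: "min_moves N cI = ?opt"
    unfolding min_moves_def
    by (rule Least_equality) (use tower_moves_solution lower in blast)+
  have "\<exists>ms. is_solution N cI ms \<and> length ms = min_moves N cI"
    using tower_moves_solution min by metis
  moreover have "moves_of_disk ms k = 3 ^ (k - 1)"
    if sol: "is_solution N cI ms" and opt: "length ms = min_moves N cI" and k: "k \<in> {1..N}" for ms k
  proof -
    have "?opt = (\<Sum>k=1..N. moves_of_disk ms k)"
      using solution_length_eq_sum[OF sol] opt min by simp
    from sum_mono_inv[OF this solution_moves_of_disk_ge[OF sol] k] show ?thesis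
      by simp
  qed
  moreover have "?opt = (3 ^ N - 1) div 2"
    unfolding sum_pow3_shift by (rule sum_pow3_closed_form)
  ultimately show ?thesis
    using min by blast
qed

end
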